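(* For any integers $k_1<k_2$, the function $\cos:(k_1\pi+\pi/2,\,k_2\pi+\pi/2)\to\mathbb{R}$ is amenable.
   Context: Relative distance on $\mathbb{R}$: $\mathrm{dist}(x,y)=0$ if $x=y=0$, $\mathrm{dist}(x,y)=|\log(y/x)|$ if $xy>0$, and $\mathrm{dist}(x,y)=\infty$ otherwise. For a real analytic function $f$ on an open set $\Omega\subseteq\mathbb{R}$, not identically zero, the condition number is $\kappa(f,x)=0$ if $x=0$, $\kappa(f,x)=\infty$ if $x\neq0$ and $f(x)=0$, and $\kappa(f,x)=|x|\,|f'(x)|/|f(x)|$ otherwise; $\mu(f,x)=1+\kappa(f,x)$. $f:\Omega\to\mathbb{R}$ is amenable if there is $C>0$ such that for every $x\in\Omega$ with $\kappa(f,x)<\infty$, the set $B_x=\{y\in\mathbb{R}:\mathrm{dist}(y,x)<1/(C\mu(f,x))\}$ is contained in $\Omega$ and $\mu(f,y)\leq C\mu(f,x)$ for all $y\in B_x$. *)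

theory Defs
  imports "HOL-Analysis.Analysis"
begin

definition reldist :: "real \<Rightarrow> real \<Rightarrow> ereal" where
  "reldist x y = (if x = 0 \<and> y = 0 then 0
                  else if x * y > 0 then ereal \<bar>ln (y / x)\<bar>
                  else \<infinity>)"

definition kappa :: "(real \<Rightarrow> real) \<Rightarrow> real \<Rightarrow> ereal" where
  "kappa f x = (if x = 0 then 0
                else if f x = 0 then \<infinity>
                else ereal (\<bar>x\<bar> * \<bar>deriv f x\<bar> / \<bar>f x\<bar>))"

definition mu :: "(real \<Rightarrow> real) \<Rightarrow> real \<Rightarrow> ereal" where
  "mu f x = 1 + kappa f x"

definition amenable :: "(real \<Rightarrow> real) \<Rightarrow> real set \<Rightarrow> bool" where
  "amenable f \<Omega> \<longleftrightarrow> (\<exists>C::real. C > 0 \<and>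
     (\<forall>x\<in>\<Omega>. kappa f x < \<infinity> \<longrightarrow>
        {y. reldist y x < 1 / (ereal C * mu f x)} \<subseteq> \<Omega> \<and>
        (\<forall>y. reldist y x < 1 / (ereal C * mu f x) \<longrightarrow> mu f y \<le> ereal C * mu f x)))"

end

theory Submission
  imports Defs
begin

text \<open>
  Write \<open>m(x) = 1 + \<bar>x\<bar> \<bar>sin x\<bar> / \<bar>cos x\<bar>\<close> for \<open>\<mu>(cos, x)\<close>. Since \<open>\<bar>cos x\<bar> + \<bar>sin x\<bar> \<ge> 1\<close>,
  \<open>\<bar>x\<bar> / \<bar>cos x\<bar> \<le> M m(x)\<close> on the interval, where \<open>M \<ge> 1\<close> bounds \<open>\<bar>x\<bar>\<close>. A point \<open>y\<close> at
  relative distance \<open>r \<le> 1\<close> from \<open>x\<close> satisfies \<open>\<bar>y - x\<bar> \<le> 3 r \<bar>x\<bar>\<close>, so for \<open>r < 1 / (8 M m(x))\<close>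
  we get \<open>\<bar>y - x\<bar> \<le> \<bar>cos x\<bar> / 2\<close>. As \<open>cos\<close> is 1-Lipschitz and vanishes at both endpoints,
  \<open>y\<close> stays in the interval and \<open>\<bar>cos y\<bar> \<ge> \<bar>cos x\<bar> / 2\<close>, whence \<open>m(y) \<le> 8 M m(x)\<close>.
\<close>

lemma reldist_zero_right: "reldist y 0 = (if y = 0 then 0 else \<infinity>)"
  by (simp add: reldist_def)

lemma reldist_less_ereal_iff:
  "x \<noteq> 0 \<Longrightarrow> reldist y x < ereal r \<longleftrightarrow> x * y > 0 \<and> \<bar>ln (x / y)\<bar> < r"
  by (auto simp: reldist_def mult.commute)

lemma kappa_less_infinity_iff: "kappa f x < \<infinity> \<longleftrightarrow> x = 0 \<or> f x \<noteq> 0"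
  by (simp add: kappa_def)

lemma mu_eq_ereal:
  "x = 0 \<or> f x \<noteq> 0 \<Longrightarrow> mu f x = ereal (1 + \<bar>x\<bar> * \<bar>deriv f x\<bar> / \<bar>f x\<bar>)"
  by (auto simp: mu_def kappa_def one_ereal_def)

text \<open>At \<open>x = 0\<close> the relative ball is \<open>{0}\<close>, so only nonzero centres need checking.\<close>

lemma amenableI:
  fixes f :: "real \<Rightarrow> real" and C :: real
  defines "m \<equiv> \<lambda>x. 1 + \<bar>x\<bar> * \<bar>deriv f x\<bar> / \<bar>f x\<bar>"
  assumes "C \<ge> 1"
    and "\<And>x y. x \<in> \<Omega> \<Longrightarrow> f x \<noteq> 0 \<Longrightarrow> x * y > 0 \<Longrightarrow> \<bar>ln (x / y)\<bar> < 1 / (C * m x) \<Longrightarrow>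
           y \<in> \<Omega> \<and> f y \<noteq> 0 \<and> m y \<le> C * m x"
  shows "amenable f \<Omega>"
  unfolding amenable_def
proof (intro exI conjI ballI impI allI)
  show "C > 0" using \<open>C \<ge> 1\<close> by simp
  fix x y assume "x \<in> \<Omega>" and "kappa f x < \<infinity>"
  then have fin: "x = 0 \<or> f x \<noteq> 0" using kappa_less_infinity_iff by blast
  have m1: "m x \<ge> 1" by (simp add: m_def)
  have mu_x: "mu f x = ereal (m x)"
    using mu_eq_ereal[where x = x and f = f, OF fin] by (simp add: m_def)
  have radius: "1 / (ereal C * mu f x) = ereal (1 / (C * m x))"
    using m1 \<open>C \<ge> 1\<close> by (simp add: mu_x one_ereal_def)
  have close: "y \<in> \<Omega> \<and> mu f y \<le> ereal C * mu f x"
    if "reldist y x < 1 / (ereal C * mu f x)" for y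
  proof (cases "x = 0")
    case True
    with that have "y = 0"
      by (auto simp: radius reldist_zero_right split: if_splits)
    then show ?thesis
      using True \<open>x \<in> \<Omega>\<close> \<open>C \<ge> 1\<close> by (simp add: mu_eq_ereal)
  next
    case False
    with fin that have "f x \<noteq> 0" "x * y > 0" "\<bar>ln (x / y)\<bar> < 1 / (C * m x)"
      by (simp_all add: radius reldist_less_ereal_iff)
    with assms(3)[OF \<open>x \<in> \<Omega>\<close>] have "y \<in> \<Omega>" "f y \<noteq> 0" "m y \<le> C * m x" by blast+
    then show ?thesis
      by (simp add: mu_x mu_eq_ereal m_def)
  qed
  show "{y. reldist y x < 1 / (ereal C * mu f x)} \<subseteq> \<Omega>" using close by blast
  fix y assume "reldist y x < 1 / (ereal C * mu f x)"
  then show "mu f y \<le> ereal C * mu f x" using close by blast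
qed

lemma abs_diff_one_le_of_abs_ln_less:
  fixes q r :: real
  assumes "q > 0" "\<bar>ln q\<bar> < r" "r \<le> 1"
  shows "\<bar>q - 1\<bar> \<le> 3 * r"
proof (cases "q \<ge> 1")
  case True
  have "ln q < 1" using assms by linarith
  then have "exp (ln q) < exp 1" by simp
  then have "q < exp 1" using \<open>q > 0\<close> by simp
  also have "exp 1 \<le> (3::real)" using exp_le by simp
  finally have "q \<le> 3" by simp
  have "ln (1 / q) \<le> 1 / q - 1" using \<open>q > 0\<close> by (intro ln_le_minus_one) simp
  then have "q - 1 \<le> q * ln q" using \<open>q > 0\<close> by (simp add: ln_div field_simps)
  also have "\<dots> \<le> 3 * r" using \<open>q \<le> 3\<close> True assms by (intro mult_mono) auto
  finally show ?thesis using True by simp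
next
  case False
  have "ln q \<le> q - 1" using \<open>q > 0\<close> by (rule ln_le_minus_one)
  then show ?thesis using False assms by auto
qed

lemma abs_diff_le_of_abs_ln_divide_less:
  fixes x y r :: real
  assumes "x * y > 0" "\<bar>ln (x / y)\<bar> < r" "r \<le> 1"
  shows "\<bar>y - x\<bar> \<le> 3 * r * \<bar>x\<bar>"
proof -
  have "x \<noteq> 0" and q_pos: "y / x > 0"
    using assms(1) by (auto simp: zero_less_divide_iff zero_less_mult_iff)
  have "ln (x / y) = - ln (y / x)"
    using q_pos by (simp add: ln_inverse[symmetric])
  then have "\<bar>y / x - 1\<bar> \<le> 3 * r"
    using assms q_pos by (intro abs_diff_one_le_of_abs_ln_less) auto
  have "\<bar>y - x\<bar> = \<bar>x\<bar> * \<bar>y / x - 1\<bar>"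
    using \<open>x \<noteq> 0\<close> by (simp add: abs_mult[symmetric] algebra_simps)
  also have "\<dots> \<le> \<bar>x\<bar> * (3 * r)"
    using \<open>\<bar>y / x - 1\<bar> \<le> 3 * r\<close> by (intro mult_left_mono) auto
  finally show ?thesis by (simp add: algebra_simps)
qed

lemma deriv_cos_real: "deriv cos x = - sin x" for x :: real
  by (rule DERIV_imp_deriv) (rule DERIV_cos)

lemma abs_cos_diff_le: "\<bar>cos w - cos z\<bar> \<le> \<bar>w - z\<bar>" for w z :: real
proof -
  have "\<bar>cos w - cos z\<bar> = 2 * \<bar>sin ((w + z) / 2)\<bar> * \<bar>sin ((z - w) / 2)\<bar>"
    by (simp add: cos_diff_cos abs_mult)
  also have "\<dots> \<le> 2 * 1 * \<bar>(z - w) / 2\<bar>"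
    by (intro mult_mono abs_sin_x_le_abs_x) auto
  finally show ?thesis by simp
qed

lemma abs_cos_plus_abs_sin_ge_one: "1 \<le> \<bar>cos x\<bar> + \<bar>sin x\<bar>" for x :: real
proof -
  have "1\<^sup>2 = \<bar>cos x\<bar>\<^sup>2 + \<bar>sin x\<bar>\<^sup>2" by simp
  also have "\<dots> \<le> (\<bar>cos x\<bar> + \<bar>sin x\<bar>)\<^sup>2"
    by (simp add: power2_sum)
  finally show ?thesis
    by (rule power2_le_imp_le) simp
qed

lemma abs_divide_abs_cos_le:
  fixes x :: real
  assumes "cos x \<noteq> 0"
  shows "\<bar>x\<bar> / \<bar>cos x\<bar> \<le> \<bar>x\<bar> + \<bar>x\<bar> * \<bar>sin x\<bar> / \<bar>cos x\<bar>"
proof -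
  have "\<bar>x\<bar> \<le> \<bar>x\<bar> * (\<bar>cos x\<bar> + \<bar>sin x\<bar>)"
    using abs_cos_plus_abs_sin_ge_one[of x] by (simp add: mult_le_cancel_left1)
  then show ?thesis using assms by (simp add: field_simps)
qed

lemma cos_near_point_between_zeros:
  fixes a b x y :: real
  assumes "a < x" "x < b" "cos a = 0" "cos b = 0" "\<bar>y - x\<bar> \<le> \<bar>cos x\<bar> / 2"
  shows "a < y" "y < b" "\<bar>cos x\<bar> / 2 \<le> \<bar>cos y\<bar>"
proof -
  have "\<bar>cos x\<bar> \<le> x - a" "\<bar>cos x\<bar> \<le> b - x"
    using abs_cos_diff_le[of x a] abs_cos_diff_le[of x b] assms by simp_all
  then show "a < y" "y < b" using assms by linarith+
  show "\<bar>cos x\<bar> / 2 \<le> \<bar>cos y\<bar>" using abs_cos_diff_le[of y x] assms(5) by linarith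
qed

lemma mu_cos_relative_ball_le:
  fixes a b x y M :: real
  defines "m \<equiv> \<lambda>x. 1 + \<bar>x\<bar> * \<bar>sin x\<bar> / \<bar>cos x\<bar>"
  assumes ab: "a < x" "x < b" "cos a = 0" "cos b = 0"
    and "cos x \<noteq> 0" "\<bar>x\<bar> \<le> M" "1 \<le> M"
    and "x * y > 0" "\<bar>ln (x / y)\<bar> < 1 / (8 * M * m x)"
  shows "a < y \<and> y < b \<and> cos y \<noteq> 0 \<and> m y \<le> 8 * M * m x"
proof -
  have c_pos: "\<bar>cos x\<bar> > 0" using \<open>cos x \<noteq> 0\<close> by simp
  have m1: "m x \<ge> 1" by (simp add: m_def)
  define t where "t = \<bar>x\<bar> * \<bar>sin x\<bar> / \<bar>cos x\<bar>"
  have "\<bar>x\<bar> / \<bar>cos x\<bar> \<le> M + t"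
    using abs_divide_abs_cos_le[OF \<open>cos x \<noteq> 0\<close>] \<open>\<bar>x\<bar> \<le> M\<close> by (simp add: t_def)
  also have "\<dots> \<le> M * m x"
    using mult_right_mono[OF \<open>1 \<le> M\<close>, of t] by (simp add: m_def t_def distrib_left)
  finally have x_over_cos: "\<bar>x\<bar> / \<bar>cos x\<bar> \<le> M * m x" .
  have "1 * 1 \<le> M * m x"
    using \<open>1 \<le> M\<close> m1 by (intro mult_mono) auto
  then have Mm1: "1 \<le> M * m x" by simp
  then have Mm: "8 * M * m x \<ge> 1" by simp
  have "\<bar>y - x\<bar> \<le> 3 * (1 / (8 * M * m x)) * \<bar>x\<bar>"
    using assms Mm by (intro abs_diff_le_of_abs_ln_divide_less) auto
  also have "\<dots> \<le> \<bar>cos x\<bar> / 2"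
    using x_over_cos c_pos Mm by (simp add: field_simps)
  finally have near: "\<bar>y - x\<bar> \<le> \<bar>cos x\<bar> / 2" .
  note y_props = cos_near_point_between_zeros[OF ab near]
  have "m y \<le> 1 + \<bar>y\<bar> / \<bar>cos y\<bar>"
    by (simp add: m_def divide_right_mono mult_left_le)
  also have "\<dots> \<le> 1 + (\<bar>x\<bar> + \<bar>cos x\<bar> / 2) / (\<bar>cos x\<bar> / 2)"
    using near y_props(3) c_pos abs_triangle_ineq2[of y x] by (intro add_left_mono frac_le) auto
  also have "\<dots> = 2 + 2 * (\<bar>x\<bar> / \<bar>cos x\<bar>)"
    using c_pos by (simp add: field_simps)
  also have "\<dots> \<le> 8 * M * m x"
    using x_over_cos Mm1 by simp
  finally show ?thesis
    using y_props c_pos by auto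
qed

theorem mainTheorem10:
  fixes k1 k2 :: int
  assumes "k1 < k2"
  shows "amenable cos {real_of_int k1 * pi + pi / 2 <..< real_of_int k2 * pi + pi / 2}"
proof -
  define a where "a = real_of_int k1 * pi + pi / 2"
  define b where "b = real_of_int k2 * pi + pi / 2"
  define M where "M = max 1 (max \<bar>a\<bar> \<bar>b\<bar>)"
  have "cos a = 0" "cos b = 0"
    unfolding a_def b_def using cos_zero_iff_int2 by blast+
  have "amenable cos {a<..<b}"
  proof (rule amenableI[where C = "8 * M"])
    show "8 * M \<ge> 1" by (simp add: M_def)
    fix x y
    assume "x \<in> {a<..<b}" "cos x \<noteq> 0" "x * y > 0"
      and "\<bar>ln (x / y)\<bar> < 1 / (8 * M * (1 + \<bar>x\<bar> * \<bar>deriv cos x\<bar> / \<bar>cos x\<bar>))"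
    moreover have "1 \<le> M" "\<bar>x\<bar> \<le> M"
      using \<open>x \<in> {a<..<b}\<close> by (auto simp: M_def)
    ultimately show "y \<in> {a<..<b} \<and> cos y \<noteq> 0 \<and>
      1 + \<bar>y\<bar> * \<bar>deriv cos y\<bar> / \<bar>cos y\<bar> \<le> 8 * M * (1 + \<bar>x\<bar> * \<bar>deriv cos x\<bar> / \<bar>cos x\<bar>)"
      using mu_cos_relative_ball_le[of a x b M y] \<open>cos a = 0\<close> \<open>cos b = 0\<close>
      by (simp add: deriv_cos_real)
  qed
  then show ?thesis by (simp add: a_def b_def)
qed

end
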